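(* Let $-\infty<m\le M<\infty$, let $A$ be a non-empty closed subset of $[m,M]$, and let $\delta>0$. Then $$\lambda\big(A^\delta\cap[m,M]\big)\ge\big(\lambda(A)+\delta\big)\wedge(M-m).$$
   Context: $\lambda$ is Lebesgue measure. For non-empty $A\subseteq\mathbb R$ and $\delta>0$, the $\delta$-expansion is $A^\delta=\{x\in\mathbb R:\exists a\in A\text{ with }|x-a|\le\delta\}$. *)

theory Defs
  imports "HOL-Analysis.Analysis"
begin

definition expansion :: "real set \<Rightarrow> real \<Rightarrow> real set" where
  "expansion A \<delta> = {x. \<exists>a\<in>A. \<bar>x - a\<bar> \<le> \<delta>}"

end

theory Submission
  imports Defs
begin

(* If A^delta covers [m, M] there is nothing to prove. Otherwise some x in [m, M] has distance
   greater than delta from A. Let b be the last point of A to the left of x, or, if A lies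
   entirely to the right of x, let c be the first point of A. The interval (b, b + delta),
   resp. (c - delta, c), lies in A^delta and in [m, M] but misses A, so it adds delta to
   the measure of A inside A^delta intersected with [m, M]. *)

lemma expansionI: "a \<in> A \<Longrightarrow> \<bar>x - a\<bar> \<le> \<delta> \<Longrightarrow> x \<in> expansion A \<delta>"
  by (auto simp: expansion_def)

lemma expansion_eq_infdist:
  assumes "closed A" "A \<noteq> {}"
  shows "expansion A \<delta> = {x. infdist x A \<le> \<delta>}"
proof (intro set_eqI iffI)
  fix x assume "x \<in> expansion A \<delta>"
  then obtain a where "a \<in> A" "\<bar>x - a\<bar> \<le> \<delta>" by (auto simp: expansion_def)
  then show "x \<in> {x. infdist x A \<le> \<delta>}"
    using infdist_le[of a A x] by (auto simp: dist_real_def)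
next
  fix x assume "x \<in> {x. infdist x A \<le> \<delta>}"
  moreover obtain a where "a \<in> A" "infdist x A = dist x a"
    using infdist_attains_inf[OF assms] by metis
  ultimately show "x \<in> expansion A \<delta>" by (auto simp: dist_real_def intro: expansionI)
qed

lemma closed_expansion: "closed A \<Longrightarrow> A \<noteq> {} \<Longrightarrow> closed (expansion A \<delta>)"
  unfolding expansion_eq_infdist by (intro closed_Collect_le continuous_intros)

lemma measure_add_disjoint_le:
  assumes "A \<in> sets N" "B \<in> sets N" "C \<in> fmeasurable N" "A \<union> B \<subseteq> C" "A \<inter> B = {}"
  shows "measure N A + measure N B \<le> measure N C"
proof -
  have "A \<in> fmeasurable N" "B \<in> fmeasurable N"
    using assms by (auto intro: fmeasurableI2)
  then have "measure N A + measure N B = measure N (A \<union> B)"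
    using assms by (intro measure_Union[symmetric]) (auto simp: fmeasurable_def)
  also have "\<dots> \<le> measure N C"
    using assms by (intro measure_mono_fmeasurable) auto
  finally show ?thesis .
qed

lemma gap_interval_in_expansion:
  fixes A :: "real set"
  assumes "closed A" "A \<noteq> {}" "A \<subseteq> {m..M}" "x \<in> {m..M}" "x \<notin> expansion A \<delta>"
  obtains l where "{l<..<l + \<delta>} \<subseteq> expansion A \<delta> \<inter> {m..M}" "A \<inter> {l<..<l + \<delta>} = {}"
proof -
  have far: "\<delta> < \<bar>x - a\<bar>" if "a \<in> A" for a
    using assms(5) that expansionI[of a A x \<delta>] by linarith
  consider "A \<inter> {..x} \<noteq> {}" | "A \<subseteq> {x<..}" by force
  then show ?thesis
  proof cases
    case 1
    define b where "b = Sup (A \<inter> {..x})"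
    have b: "b \<in> A" "b \<le> x"
      using 1 assms(1) closed_contains_Sup[of "A \<inter> {..x}"] by (auto simp: b_def)
    have "y \<le> b" if "y \<in> A" "y \<le> x" for y
      using that by (auto simp: b_def intro: cSup_upper)
    moreover have "b + \<delta> < x" using far[OF b(1)] b(2) by simp
    moreover have "{b<..<b + \<delta>} \<subseteq> expansion A \<delta>"
      using b(1) by (auto intro: expansionI)
    ultimately show ?thesis
      using b assms(3,4) by (intro that[of b]) force+
  next
    case 2
    have bdd: "bdd_below A" using assms(3) by (meson bdd_below_Icc bdd_below_mono)
    define c where "c = Inf A"
    have c: "c \<in> A" using closed_contains_Inf[OF assms(2) bdd assms(1)] by (simp add: c_def)
    have "c \<le> y" if "y \<in> A" for y
      using that bdd by (auto simp: c_def intro: cInf_lower)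
    moreover have "x < c - \<delta>" using far[OF c] 2 c by force
    moreover have "{c - \<delta><..<c} \<subseteq> expansion A \<delta>"
      using c by (auto intro: expansionI)
    ultimately show ?thesis
      using c assms(3,4) by (intro that[of "c - \<delta>"]) force+
  qed
qed

theorem mainTheorem18:
  fixes m M \<delta> :: real and A :: "real set"
  assumes "m \<le> M" and "A \<noteq> {}" and "closed A" and "A \<subseteq> {m..M}" and "\<delta> > 0"
  shows "measure lborel (expansion A \<delta> \<inter> {m..M}) \<ge> min (measure lborel A + \<delta>) (M - m)"
proof (cases "{m..M} \<subseteq> expansion A \<delta>")
  case True
  then have "expansion A \<delta> \<inter> {m..M} = {m..M}" by auto
  then show ?thesis using assms(1) by simp
next
  case False
  then obtain x where "x \<in> {m..M}" "x \<notin> expansion A \<delta>" by blast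
  then obtain l where gap: "{l<..<l + \<delta>} \<subseteq> expansion A \<delta> \<inter> {m..M}" "A \<inter> {l<..<l + \<delta>} = {}"
    using gap_interval_in_expansion assms(2-4) by blast
  have "compact (expansion A \<delta> \<inter> {m..M})"
    using closed_expansion[OF assms(3,2)] by (intro closed_Int_compact) auto
  then have "expansion A \<delta> \<inter> {m..M} \<in> fmeasurable lborel"
    by (rule fmeasurable_compact)
  moreover have "A \<subseteq> expansion A \<delta> \<inter> {m..M}"
    using assms(4,5) by (auto intro: expansionI)
  moreover have "A \<in> sets lborel"
    using assms(3) by simp
  ultimately have "measure lborel A + measure lborel {l<..<l + \<delta>}
      \<le> measure lborel (expansion A \<delta> \<inter> {m..M})"
    using gap by (intro measure_add_disjoint_le) auto
  then show ?thesis using assms(5) by simp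
qed

end
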